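(* Let $G$ be a finite bipartite multigraph and let $d_v$ denote the degree of $v\in V(G)$. Assume each vertex $v$ is assigned a nonnegative integer $u_v$ with $2u_v\le d_v$. Then there exist a subset of edges $W\subset E(G)$ and an orientation of the edges of $W$ such that the outdegree (with respect to the oriented edges of $W$) of each vertex $v$ is exactly $u_v$.
   Context: In a multigraph, multiple edges between the same pair of vertices are allowed and each contributes to the degree. *)

theory Defs
  imports Main
begin

text \<open>A finite multigraph is given by a vertex set V, a set of edge identifiers E
  and two endpoint maps end1, end2 (parallel edges = distinct identifiers with the
  same endpoints).\<close>

definition multigraph :: "'a set \<Rightarrow> 'e set \<Rightarrow> ('e \<Rightarrow> 'a) \<Rightarrow> ('e \<Rightarrow> 'a) \<Rightarrow> bool" where
  "multigraph V E end1 end2 \<longleftrightarrow> finite V \<and> finite E \<and> (\<forall>e\<in>E. end1 e \<in> V \<and> end2 e \<in> V)"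

definition bipartite_mg :: "'a set \<Rightarrow> 'e set \<Rightarrow> ('e \<Rightarrow> 'a) \<Rightarrow> ('e \<Rightarrow> 'a) \<Rightarrow> bool" where
  "bipartite_mg V E end1 end2 \<longleftrightarrow> (\<exists>A B. A \<inter> B = {} \<and> A \<union> B = V \<and>
     (\<forall>e\<in>E. (end1 e \<in> A \<and> end2 e \<in> B) \<or> (end1 e \<in> B \<and> end2 e \<in> A)))"

definition mg_degree :: "'e set \<Rightarrow> ('e \<Rightarrow> 'a) \<Rightarrow> ('e \<Rightarrow> 'a) \<Rightarrow> 'a \<Rightarrow> nat" where
  "mg_degree E end1 end2 v = card {e\<in>E. end1 e = v} + card {e\<in>E. end2 e = v}"

definition is_orientation :: "'e set \<Rightarrow> ('e \<Rightarrow> 'a) \<Rightarrow> ('e \<Rightarrow> 'a) \<Rightarrow> ('e \<Rightarrow> 'a) \<Rightarrow> bool" where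
  "is_orientation W end1 end2 tail \<longleftrightarrow> (\<forall>e\<in>W. tail e = end1 e \<or> tail e = end2 e)"

definition outdeg :: "'e set \<Rightarrow> ('e \<Rightarrow> 'a) \<Rightarrow> 'a \<Rightarrow> nat" where
  "outdeg W tail v = card {e\<in>W. tail e = v}"

end

theory Submission
  imports Defs
begin

text \<open>Every finite multigraph, bipartite or not and loops allowed, has an orientation in which
  each vertex v satisfies d(v) \<le> 2 out(v) + 1. If two distinct edges va and vb share a vertex v,
  replace them by a single edge ab and orient the smaller multigraph by induction; routing
  the oriented edge back through v keeps all outdegrees except that of v, which grows by one
  while d(v) grows by two. If no two edges share a vertex, every orientation works.
  Given such an orientation, 2u(v) \<le> d(v) forces u(v) \<le> out(v), and W keeps u(v) of the
  out-edges of each vertex.\<close>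

definition half_out_orientation ::
  "'e set \<Rightarrow> ('e \<Rightarrow> 'a) \<Rightarrow> ('e \<Rightarrow> 'a) \<Rightarrow> ('e \<Rightarrow> 'a) \<Rightarrow> bool" where
  "half_out_orientation E end1 end2 tail \<longleftrightarrow>
     is_orientation E end1 end2 tail \<and> (\<forall>v. mg_degree E end1 end2 v \<le> 2 * outdeg E tail v + 1)"

definition other_end :: "('e \<Rightarrow> 'a) \<Rightarrow> ('e \<Rightarrow> 'a) \<Rightarrow> 'a \<Rightarrow> 'e \<Rightarrow> 'a" where
  "other_end end1 end2 v e = (if end1 e = v then end2 e else end1 e)"

lemma card_filter_insert:
  assumes "finite E" "e \<notin> E"
  shows "card {x \<in> insert e E. P x} = card {x \<in> E. P x} + of_bool (P e)"
proof (cases "P e")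
  case True
  then have "{x \<in> insert e E. P x} = insert e {x \<in> E. P x}" by auto
  then show ?thesis using assms True by simp
next
  case False
  then have "{x \<in> insert e E. P x} = {x \<in> E. P x}" by auto
  then show ?thesis using False by simp
qed

lemma mg_degree_insert:
  assumes "finite E" "e \<notin> E"
  shows "mg_degree (insert e E) end1 end2 v =
           mg_degree E end1 end2 v + of_bool (end1 e = v) + of_bool (end2 e = v)"
  unfolding mg_degree_def card_filter_insert[OF assms] by simp

lemma mg_degree_cong:
  assumes "\<And>e. e \<in> E \<Longrightarrow> end1 e = end1' e \<and> end2 e = end2' e"
  shows "mg_degree E end1 end2 v = mg_degree E end1' end2' v"
  using assms unfolding mg_degree_def by (simp cong: conj_cong)

lemma outdeg_insert:
  assumes "finite E" "e \<notin> E"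
  shows "outdeg (insert e E) tail v = outdeg E tail v + of_bool (tail e = v)"
  unfolding outdeg_def card_filter_insert[OF assms] ..

lemma outdeg_cong:
  assumes "\<And>e. e \<in> E \<Longrightarrow> tail e = tail' e"
  shows "outdeg E tail v = outdeg E tail' v"
  using assms unfolding outdeg_def by (simp cong: conj_cong)

lemma of_bool_ends_other_end:
  assumes "end1 e = v \<or> end2 e = v"
  shows "of_bool (end1 e = w) + of_bool (end2 e = w) =
           (of_bool (v = w) + of_bool (other_end end1 end2 v e = w) :: nat)"
  using assms by (auto simp: other_end_def)

lemma mg_degree_split_pair:
  assumes "finite E" "e1 \<in> E" "e2 \<in> E" "e1 \<noteq> e2"
    and "end1 e1 = v \<or> end2 e1 = v" "end1 e2 = v \<or> end2 e2 = v"
  defines "a \<equiv> other_end end1 end2 v e1" and "b \<equiv> other_end end1 end2 v e2"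
  shows "mg_degree E end1 end2 w =
           mg_degree (E - {e2}) (end1(e1 := a)) (end2(e1 := b)) w + 2 * of_bool (v = w)"
proof -
  define R where "R = E - {e1, e2}"
  have R: "finite R" "e1 \<notin> R" "e2 \<notin> insert e1 R" "E = insert e2 (insert e1 R)"
    "E - {e2} = insert e1 R"
    using assms(1-4) by (auto simp: R_def)
  have "mg_degree E end1 end2 w = mg_degree R end1 end2 w
          + of_bool (end1 e1 = w) + of_bool (end2 e1 = w)
          + of_bool (end1 e2 = w) + of_bool (end2 e2 = w)"
    using R by (simp add: mg_degree_insert)
  also have "\<dots> = mg_degree R end1 end2 w + of_bool (a = w) + of_bool (b = w) + 2 * of_bool (v = w)"
    using of_bool_ends_other_end[of end1 e1 v end2 w] of_bool_ends_other_end[of end1 e2 v end2 w]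
      assms(5,6) by (simp add: a_def b_def)
  also have "mg_degree R end1 end2 w = mg_degree R (end1(e1 := a)) (end2(e1 := b)) w"
    using R(2) by (intro mg_degree_cong) auto
  also have "\<dots> + of_bool (a = w) + of_bool (b = w) =
               mg_degree (E - {e2}) (end1(e1 := a)) (end2(e1 := b)) w"
    using R by (simp add: mg_degree_insert)
  finally show ?thesis .
qed

lemma half_out_orientation_unsplit_pair:
  assumes "finite E" "e1 \<in> E" "e2 \<in> E" "e1 \<noteq> e2"
    and "end1 e1 = v \<or> end2 e1 = v" "end1 e2 = v \<or> end2 e2 = v"
  defines "a \<equiv> other_end end1 end2 v e1" and "b \<equiv> other_end end1 end2 v e2"
  assumes "half_out_orientation (E - {e2}) (end1(e1 := a)) (end2(e1 := b)) t"
  shows "\<exists>tail. half_out_orientation E end1 end2 tail"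
proof -
  define R where "R = E - {e1, e2}"
  have R: "finite R" "e1 \<notin> R" "e2 \<notin> insert e1 R" "E = insert e2 (insert e1 R)"
    "E - {e2} = insert e1 R"
    using assms(1-4) by (auto simp: R_def)
  have t: "\<forall>e \<in> E - {e2}. t e = (end1(e1 := a)) e \<or> t e = (end2(e1 := b)) e"
    using assms(9) by (simp add: half_out_orientation_def is_orientation_def)
  have t_e1: "t e1 = a \<or> t e1 = b"
    using bspec[OF t, of e1] assms(2,4) by simp
  \<comment> \<open>route the oriented merged edge ab through v: its tail keeps one out-edge, v gets the other\<close>
  define tail where "tail = (if t e1 = a then t(e2 := v) else t(e1 := v, e2 := b))"
  have "is_orientation E end1 end2 tail"
    unfolding is_orientation_def
  proof
    fix e assume "e \<in> E"
    then consider "e = e1" | "e = e2" | "e \<in> E - {e2}" "e \<noteq> e1" by blast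
    then show "tail e = end1 e \<or> tail e = end2 e"
    proof cases
      case 1
      then show ?thesis using assms(4,5) by (auto simp: tail_def a_def other_end_def)
    next
      case 2
      then show ?thesis using assms(6) by (auto simp: tail_def b_def other_end_def)
    next
      case 3
      then show ?thesis using bspec[OF t, of e] by (auto simp: tail_def)
    qed
  qed
  moreover have "outdeg E tail w = outdeg (E - {e2}) t w + of_bool (v = w)" for w
  proof -
    have "outdeg R tail w = outdeg R t w"
      using R(2,3) by (intro outdeg_cong) (auto simp: tail_def)
    then have "outdeg E tail w = outdeg R t w + of_bool (tail e1 = w) + of_bool (tail e2 = w)"
      using R by (simp add: outdeg_insert)
    moreover have "outdeg (E - {e2}) t w = outdeg R t w + of_bool (t e1 = w)"
      using R by (simp add: outdeg_insert)
    ultimately show ?thesis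
      using t_e1 assms(4) by (auto simp: tail_def)
  qed
  ultimately have "half_out_orientation E end1 end2 tail"
    using assms(9) mg_degree_split_pair[OF assms(1-6)]
    by (simp add: half_out_orientation_def a_def b_def)
  then show ?thesis by blast
qed

lemma half_out_orientation_end1:
  assumes "finite E" "inj_on end2 E"
  shows "half_out_orientation E end1 end2 end1"
proof -
  have "mg_degree E end1 end2 v \<le> 2 * outdeg E end1 v + 1" for v
  proof -
    have "card {e \<in> E. end2 e = v} \<le> 1"
      using assms by (auto simp: card_le_Suc0_iff_eq inj_on_def)
    then show ?thesis
      unfolding mg_degree_def outdeg_def by linarith
  qed
  then show ?thesis
    by (simp add: half_out_orientation_def is_orientation_def)
qed

lemma half_out_orientation_exists:
  "finite E \<Longrightarrow> \<exists>tail. half_out_orientation E end1 end2 tail"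
proof (induction "card E" arbitrary: E end1 end2 rule: less_induct)
  case less
  show ?case
  proof (cases "\<exists>e1\<in>E. \<exists>e2\<in>E. \<exists>v. e1 \<noteq> e2 \<and>
                  (end1 e1 = v \<or> end2 e1 = v) \<and> (end1 e2 = v \<or> end2 e2 = v)")
    case True
    then obtain e1 e2 v where e12: "e1 \<in> E" "e2 \<in> E" "e1 \<noteq> e2"
      and incident: "end1 e1 = v \<or> end2 e1 = v" "end1 e2 = v \<or> end2 e2 = v"
      by blast
    have "card (E - {e2}) < card E"
      using less.prems e12(2) by (rule card_Diff1_less)
    then obtain t where "half_out_orientation (E - {e2})
        (end1(e1 := other_end end1 end2 v e1)) (end2(e1 := other_end end1 end2 v e2)) t"
      using less.hyps less.prems by blast
    then show ?thesis
      by (rule half_out_orientation_unsplit_pair[OF less.prems e12 incident])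
  next
    case False
    then have "inj_on end2 E"
      by (auto simp: inj_on_def)
    then show ?thesis
      using half_out_orientation_end1 less.prems by blast
  qed
qed

lemma obtain_suborientation_with_outdeg:
  assumes "is_orientation E end1 end2 tail" "\<forall>v\<in>V. u v \<le> outdeg E tail v"
  obtains W where "W \<subseteq> E" "is_orientation W end1 end2 tail" "\<forall>v\<in>V. outdeg W tail v = u v"
proof -
  have "\<forall>v\<in>V. \<exists>S. S \<subseteq> {e \<in> E. tail e = v} \<and> card S = u v"
  proof
    fix v assume "v \<in> V"
    then have "u v \<le> card {e \<in> E. tail e = v}"
      using assms(2) by (simp add: outdeg_def)
    then obtain S where "S \<subseteq> {e \<in> E. tail e = v}" "card S = u v"
      by (rule obtain_subset_with_card_n)
    then show "\<exists>S. S \<subseteq> {e \<in> E. tail e = v} \<and> card S = u v" by blast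
  qed
  then obtain S where S: "\<forall>v\<in>V. S v \<subseteq> {e \<in> E. tail e = v} \<and> card (S v) = u v"
    by (rule bchoice [THEN exE])
  show thesis
  proof
    show "(\<Union>v\<in>V. S v) \<subseteq> E"
      using S by blast
    then show "is_orientation (\<Union>v\<in>V. S v) end1 end2 tail"
      using assms(1) unfolding is_orientation_def by blast
    have "{e \<in> (\<Union>w\<in>V. S w). tail e = v} = S v" if "v \<in> V" for v
      using S that by blast
    then show "\<forall>v\<in>V. outdeg (\<Union>v\<in>V. S v) tail v = u v"
      using S by (simp add: outdeg_def)
  qed
qed

theorem claim2p2:
  fixes V :: "'a set" and E :: "'e set" and end1 end2 :: "'e \<Rightarrow> 'a" and u :: "'a \<Rightarrow> nat"
  assumes "multigraph V E end1 end2"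
    and "bipartite_mg V E end1 end2"
    and "\<forall>v\<in>V. 2 * u v \<le> mg_degree E end1 end2 v"
  shows "\<exists>W tail. W \<subseteq> E \<and> is_orientation W end1 end2 tail \<and> (\<forall>v\<in>V. outdeg W tail v = u v)"
proof -
  have "finite E"
    using assms(1) by (simp add: multigraph_def)
  then obtain tail where half: "half_out_orientation E end1 end2 tail"
    using half_out_orientation_exists by blast
  have orientation: "is_orientation E end1 end2 tail"
    using half by (simp add: half_out_orientation_def)
  have "\<forall>v\<in>V. u v \<le> outdeg E tail v"
  proof
    fix v assume "v \<in> V"
    then have "2 * u v \<le> mg_degree E end1 end2 v"
      using assms(3) by blast
    also have "\<dots> \<le> 2 * outdeg E tail v + 1"
      using half by (simp add: half_out_orientation_def)
    finally show "u v \<le> outdeg E tail v" by linarith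
  qed
  then obtain W where "W \<subseteq> E" "is_orientation W end1 end2 tail" "\<forall>v\<in>V. outdeg W tail v = u v"
    by (rule obtain_suborientation_with_outdeg[OF orientation])
  then show ?thesis
    by (intro exI[of _ W] exI[of _ tail]) simp
qed

end
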